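(* There is a constant $C_1>0$ such that for all integers $r\geq1$ and $k_1,\ldots,k_r\geq2$, writing $K=k_1+\cdots+k_r$, \[ \frac{1}{2^{K}}<\sum_{n_1\geq\cdots\geq n_r\geq2}\frac{1}{n_1^{k_1}\cdots n_r^{k_r}}\leq\frac{C_1}{2^{K}},\qquad \frac{1}{2^{K+1}}<\sum_{n_1\geq\cdots\geq n_{r+1}\geq2}\frac{1}{n_1^{k_1}\cdots n_r^{k_r}\,n_{r+1}}\leq\frac{C_1}{2^{K}}. \]
   Context: The constant $C_1$ is independent of $r$ and $k_1,\ldots,k_r$. *)

theory Defs
  imports "HOL-Analysis.Analysis"
begin

text \<open>Index tuples (n_1,...,n_m) with n_1 \<ge> ... \<ge> n_m \<ge> 2, stored as
  extensional functions on {..<m}: position i (0-based) holds n_(i+1).\<close>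
definition desc_tuples :: "nat \<Rightarrow> (nat \<Rightarrow> nat) set" where
  "desc_tuples m = {n. n \<in> {..<m} \<rightarrow>\<^sub>E (UNIV :: nat set)
      \<and> (\<forall>i. Suc i < m \<longrightarrow> n (Suc i) \<le> n i)
      \<and> (\<forall>i<m. 2 \<le> n i)}"

end

(*
  After factoring out 2^K, every factor (2/n_i)^k_i is at most 4/n_i^2.  Summing over the
  largest coordinate first, the bound Q(m) = 6m(m-1)/((m+1)(m+2)) for the sum over tuples
  with entries at most m reproduces itself, because Q(m) = Q(m-1) + (4/m^2) Q(m) gives
  Q(m) = sum_{a=2..m} (4/a^2) Q(a).  Hence these sums are at most Q(m) < 6, uniformly in r.
  In the second sum the last two coordinates contribute at most
  sum_{c >= b >= 2} 4/(c^2 b) <= 4, so both sums are at most 24/2^K.  The lower bounds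
  come from the term with all n_i = 2 together with any other (positive) term.
*)
theory Submission
  imports Defs
begin

definition desc_tuples_le :: "nat \<Rightarrow> nat \<Rightarrow> (nat \<Rightarrow> nat) set" where
  "desc_tuples_le q m = {n \<in> desc_tuples q. \<forall>i<q. n i \<le> m}"

definition tuple_cons :: "nat \<Rightarrow> (nat \<Rightarrow> nat) \<Rightarrow> nat \<Rightarrow> nat" where
  "tuple_cons a t = (\<lambda>i. if i = 0 then a else t (i - 1))"

lemma desc_tuples_antimono:
  assumes "n \<in> desc_tuples q" "i \<le> j" "j < q"
  shows "n j \<le> n i"
  using assms(2,3)
proof (induction j)
  case (Suc j)
  have "n (Suc j) \<le> n j" using assms(1) Suc.prems by (auto simp: desc_tuples_def)
  then show ?case using Suc by (cases "i = Suc j") auto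
qed simp

lemma finite_desc_tuples_le: "finite (desc_tuples_le q m)"
proof (rule finite_subset)
  show "desc_tuples_le q m \<subseteq> PiE {..<q} (\<lambda>_. {..m})"
    by (auto simp: desc_tuples_le_def desc_tuples_def PiE_def extensional_def)
qed (simp add: finite_PiE)

lemma desc_tuples_le_0: "desc_tuples_le 0 m = {\<lambda>_. undefined}"
  by (auto simp: desc_tuples_le_def desc_tuples_def PiE_def extensional_def)

lemma desc_tuples_le_Suc:
  "desc_tuples_le (Suc q) m = (\<lambda>(a, t). tuple_cons a t) ` (SIGMA a:{2..m}. desc_tuples_le q a)"
proof (intro equalityI subsetI)
  fix n assume n: "n \<in> desc_tuples_le (Suc q) m"
  have "(\<lambda>i. n (Suc i)) \<in> desc_tuples_le q (n 0)"
    using n desc_tuples_antimono[of n "Suc q" 0]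
    by (auto simp: desc_tuples_le_def desc_tuples_def PiE_def extensional_def)
  moreover have "n 0 \<in> {2..m}" using n by (auto simp: desc_tuples_le_def desc_tuples_def)
  moreover have "n = tuple_cons (n 0) (\<lambda>i. n (Suc i))" by (auto simp: tuple_cons_def)
  ultimately show "n \<in> (\<lambda>(a, t). tuple_cons a t) ` (SIGMA a:{2..m}. desc_tuples_le q a)"
    by force
next
  fix n assume "n \<in> (\<lambda>(a, t). tuple_cons a t) ` (SIGMA a:{2..m}. desc_tuples_le q a)"
  then obtain a t where a: "a \<in> {2..m}" and t: "t \<in> desc_tuples_le q a"
    and n: "n = tuple_cons a t" by auto
  have "n (Suc i) \<le> n i" if "Suc i < Suc q" for i
    using t that by (cases i) (auto simp: n tuple_cons_def desc_tuples_le_def desc_tuples_def)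
  moreover have "2 \<le> n i \<and> n i \<le> m" if "i < Suc q" for i
    using a t that by (cases i) (auto simp: n tuple_cons_def desc_tuples_le_def desc_tuples_def)
  moreover have "n \<in> {..<Suc q} \<rightarrow>\<^sub>E UNIV"
    using t by (auto simp: n desc_tuples_le_def desc_tuples_def PiE_def extensional_def tuple_cons_def)
  ultimately show "n \<in> desc_tuples_le (Suc q) m"
    by (simp add: desc_tuples_le_def desc_tuples_def)
qed

lemma inj_on_tuple_cons: "inj_on (\<lambda>(a, t). tuple_cons a t) X"
proof (rule inj_onI, clarify)
  fix a t b u assume eq: "tuple_cons a t = tuple_cons b u"
  have "t = u"
  proof
    fix i show "t i = u i" using fun_cong[OF eq, of "Suc i"] by (simp add: tuple_cons_def)
  qed
  then show "a = b \<and> t = u" using fun_cong[OF eq, of 0] by (simp add: tuple_cons_def)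
qed

lemma sum_desc_tuples_le_Suc:
  "(\<Sum>n\<in>desc_tuples_le (Suc q) m. F n) = (\<Sum>a=2..m. \<Sum>t\<in>desc_tuples_le q a. F (tuple_cons a t))"
  unfolding desc_tuples_le_Suc
  by (subst sum.reindex[OF inj_on_tuple_cons])
     (simp add: sum.Sigma finite_desc_tuples_le split_def)

definition weight_fixpoint :: "nat \<Rightarrow> real" where
  "weight_fixpoint m = 6 * real m * (real m - 1) / ((real m + 1) * (real m + 2))"

lemma weight_fixpoint_Suc:
  "weight_fixpoint (Suc m) = weight_fixpoint m + 4 / real (Suc m) ^ 2 * weight_fixpoint (Suc m)"
proof -
  define x where "x = real m"
  define d where "d = (x + 1) * ((x + 2) * (x + 3))"
  have "x + 1 \<noteq> 0" "x + 3 \<noteq> 0" unfolding x_def by linarith+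
  have "weight_fixpoint (Suc m) = 6 * (x + 1) * x / ((x + 2) * (x + 3))"
    by (simp add: weight_fixpoint_def x_def algebra_simps)
  also have "\<dots> = (x + 1) * (6 * (x + 1) * x) / d"
    using \<open>x + 1 \<noteq> 0\<close> by (simp add: d_def)
  also have "\<dots> = 6 * x * (x - 1) * (x + 3) / d + 24 * x / d"
    by (simp add: add_divide_distrib[symmetric] algebra_simps)
  also have "6 * x * (x - 1) * (x + 3) / d = weight_fixpoint m"
    using \<open>x + 3 \<noteq> 0\<close> by (simp add: weight_fixpoint_def x_def d_def)
  also have "24 * x / d = (x + 1) * (24 * x) / ((x + 1) * d)"
    using \<open>x + 1 \<noteq> 0\<close> by simp
  also have "\<dots> = 4 / real (Suc m) ^ 2 * weight_fixpoint (Suc m)"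
    by (simp add: weight_fixpoint_def x_def d_def power2_eq_square algebra_simps)
  finally show ?thesis .
qed

lemma weight_fixpoint_ge_1: "m \<ge> 2 \<Longrightarrow> weight_fixpoint m \<ge> 1"
proof -
  assume "m \<ge> 2"
  then have "0 \<le> (5 * real m + 1) * (real m - 2)" by simp
  then have "(real m + 1) * (real m + 2) \<le> 6 * real m * (real m - 1)" by (simp add: algebra_simps)
  then show ?thesis by (simp add: weight_fixpoint_def)
qed

lemma weight_fixpoint_le_6: "weight_fixpoint m \<le> 6"
proof -
  have "6 * real m * (real m - 1) \<le> 6 * ((real m + 1) * (real m + 2))" by (simp add: algebra_simps)
  then show ?thesis by (simp add: weight_fixpoint_def divide_le_eq)
qed

lemma sum_weight_fixpoint:
  "m \<ge> 2 \<Longrightarrow> (\<Sum>a=2..m. 4 / real a ^ 2 * weight_fixpoint a) = weight_fixpoint m"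
proof (induction m rule: dec_induct)
  case base then show ?case by (simp add: weight_fixpoint_def)
next
  case (step m)
  have "(\<Sum>a=2..Suc m. 4 / real a ^ 2 * weight_fixpoint a)
      = (\<Sum>a=2..m. 4 / real a ^ 2 * weight_fixpoint a) + 4 / real (Suc m) ^ 2 * weight_fixpoint (Suc m)"
    using step(1) by (subst sum.cl_ivl_Suc) simp
  also have "\<dots> = weight_fixpoint (Suc m)"
    unfolding step.IH by (rule weight_fixpoint_Suc[symmetric])
  finally show ?case .
qed

lemma sum_weighted_le_weight_fixpoint:
  fixes w G :: "nat \<Rightarrow> real"
  assumes "\<And>a. a \<ge> 2 \<Longrightarrow> 0 \<le> w a \<and> w a \<le> 4 / real a ^ 2"
    and "\<And>a. a \<ge> 2 \<Longrightarrow> G a \<le> weight_fixpoint a * B" and "B \<ge> 0" and "m \<ge> 2"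
  shows "(\<Sum>a=2..m. w a * G a) \<le> weight_fixpoint m * B"
proof -
  have "(\<Sum>a=2..m. w a * G a) \<le> (\<Sum>a=2..m. 4 / real a ^ 2 * (weight_fixpoint a * B))"
  proof (rule sum_mono)
    fix a assume "a \<in> {2..m}"
    moreover from this have "0 \<le> weight_fixpoint a * B"
      using weight_fixpoint_ge_1[of a] \<open>B \<ge> 0\<close> by simp
    moreover have "0 \<le> w a" "w a \<le> 4 / real a ^ 2" "G a \<le> weight_fixpoint a * B"
      using assms(1,2)[of a] \<open>a \<in> {2..m}\<close> by auto
    ultimately show "w a * G a \<le> 4 / real a ^ 2 * (weight_fixpoint a * B)"
      by (metis mult_left_mono mult_right_mono order_trans)
  qed
  also have "\<dots> = weight_fixpoint m * B"
    by (simp only: mult.assoc[symmetric] sum_distrib_right[symmetric]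
        sum_weight_fixpoint[OF \<open>m \<ge> 2\<close>])
  finally show ?thesis .
qed

lemma sum_desc_tuples_le_weighted_prod_le:
  fixes w :: "nat \<Rightarrow> nat \<Rightarrow> real" and F :: "(nat \<Rightarrow> nat) \<Rightarrow> real"
  assumes tail: "\<And>a. a \<ge> 2 \<Longrightarrow> (\<Sum>t\<in>desc_tuples_le s a. F t) \<le> B" and "B \<ge> 0"
    and "\<And>i a. i < p \<Longrightarrow> a \<ge> 2 \<Longrightarrow> 0 \<le> w i a \<and> w i a \<le> 4 / real a ^ 2"
    and "m \<ge> 2"
  shows "(\<Sum>n\<in>desc_tuples_le (p + s) m. (\<Prod>i<p. w i (n i)) * F (\<lambda>j. n (p + j)))
    \<le> weight_fixpoint m * B"
  using assms(3,4)
proof (induction p arbitrary: w m)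
  case 0
  have "B \<le> weight_fixpoint m * B"
    using weight_fixpoint_ge_1[OF 0(2)] \<open>B \<ge> 0\<close> by (simp add: mult_le_cancel_right1)
  then show ?case using tail[OF 0(2)] by simp
next
  case (Suc p)
  have "(\<Sum>n\<in>desc_tuples_le (Suc p + s) m. (\<Prod>i<Suc p. w i (n i)) * F (\<lambda>j. n (Suc p + j)))
      = (\<Sum>a=2..m. w 0 a *
          (\<Sum>t\<in>desc_tuples_le (p + s) a. (\<Prod>i<p. w (Suc i) (t i)) * F (\<lambda>j. t (p + j))))"
    by (simp add: sum_desc_tuples_le_Suc prod.lessThan_Suc_shift tuple_cons_def
        sum_distrib_left mult.assoc del: prod.lessThan_Suc)
  also have "\<dots> \<le> weight_fixpoint m * B"
    by (rule sum_weighted_le_weight_fixpoint)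
       (use Suc.IH[of "\<lambda>i. w (Suc i)"] Suc.prems \<open>B \<ge> 0\<close> in auto)
  finally show ?case .
qed

lemma two_div_power_le:
  assumes "k \<ge> 2" "a \<ge> 2"
  shows "(2 / real a) ^ k \<le> 4 / real a ^ 2"
proof -
  have "(2 / real a) ^ k \<le> (2 / real a) ^ 2" using assms by (intro power_decreasing) auto
  then show ?thesis by (simp add: power_divide)
qed

lemma prod_div_power:
  fixes c :: "'a :: field"
  shows "(\<Prod>i\<in>I. (c / x i) ^ k i) = c ^ (\<Sum>i\<in>I. k i) / (\<Prod>i\<in>I. x i ^ k i)"
  by (simp add: power_divide prod_dividef power_sum)

lemma sum_desc_tuples_le_inverse_prod_power_le:
  assumes "\<forall>i<r. k i \<ge> 2" "m \<ge> 2"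
  shows "(\<Sum>n\<in>desc_tuples_le r m. 1 / (\<Prod>i<r. real (n i) ^ k i)) \<le> 6 / 2 ^ (\<Sum>i<r. k i)"
proof -
  have "(\<Sum>n\<in>desc_tuples_le r m. 1 / (\<Prod>i<r. real (n i) ^ k i))
      = (\<Sum>n\<in>desc_tuples_le (r + 0) m. (\<Prod>i<r. (2 / real (n i)) ^ k i) * 1) / 2 ^ (\<Sum>i<r. k i)"
    by (simp add: prod_div_power sum_divide_distrib)
  also have "\<dots> \<le> weight_fixpoint m * 1 / 2 ^ (\<Sum>i<r. k i)"
    using assms two_div_power_le desc_tuples_le_0
    by (intro divide_right_mono sum_desc_tuples_le_weighted_prod_le) auto
  also have "\<dots> \<le> 6 / 2 ^ (\<Sum>i<r. k i)"
    using weight_fixpoint_le_6 by (simp add: divide_right_mono)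
  finally show ?thesis .
qed

text \<open>The extra term (1 + H_a)/a makes the induction go through; in the limit the
  inequality says \<open>\<Sum>c\<ge>2. H_c / c\<^sup>2 \<le> 1\<close> with \<open>H_c = \<Sum>b=2..c. 1/b\<close>.\<close>
lemma sum_harmonic_div_square_le:
  "a \<ge> 1 \<Longrightarrow> (\<Sum>c=2..a. (\<Sum>b=2..c. 1 / real b) / real c ^ 2)
     \<le> 1 - (1 + (\<Sum>b=2..a. 1 / real b)) / real a"
proof (induction a rule: dec_induct)
  case base then show ?case by simp
next
  case (step a)
  define H where "H = (\<Sum>b=2..a. 1 / real b)"
  define u where "u = real a + 1"
  have u: "u \<ge> 2" using step(1) by (simp add: u_def)
  have H_nonneg: "H \<ge> 0" unfolding H_def by (intro sum_nonneg) auto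
  have H_Suc: "(\<Sum>b=2..Suc a. 1 / real b) = H + 1 / u"
    unfolding H_def u_def using step(1) by (simp add: sum.cl_ivl_Suc add.commute)
  have key: "(H + 1/u) / u^2 + (H + 1/u) / u + 1/u \<le> 1/(u - 1) + H/(u - 1)"
  proof -
    have "H * (1/u^2 + 1/u) \<le> H * (1/(u - 1))"
      using u H_nonneg by (intro mult_left_mono) (simp_all add: field_simps power2_eq_square)
    moreover have "1/u^3 + 1/u^2 + 1/u \<le> 1/(u - 1)"
      using u by (simp add: field_simps power2_eq_square power3_eq_cube)
    moreover have "(H + 1/u) / u^2 + (H + 1/u) / u + 1/u
        = H * (1/u^2 + 1/u) + (1/u^3 + 1/u^2 + 1/u)"
      using u by (simp add: field_simps power2_eq_square power3_eq_cube)
    ultimately show ?thesis by (simp add: add_divide_distrib)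
  qed
  have IH: "(\<Sum>c=2..a. (\<Sum>b=2..c. 1 / real b) / real c ^ 2) \<le> 1 - (1 + H) / (u - 1)"
    using step(3) by (simp add: H_def u_def)
  have "(\<Sum>c=2..Suc a. (\<Sum>b=2..c. 1 / real b) / real c ^ 2)
      = (\<Sum>c=2..a. (\<Sum>b=2..c. 1 / real b) / real c ^ 2) + (H + 1/u) / u^2"
    using step(1) H_Suc by (simp add: u_def add.commute)
  also have "\<dots> \<le> 1 - (1 + (H + 1/u)) / u"
    using IH key by (simp add: add_divide_distrib)
  also have "\<dots> = 1 - (1 + (\<Sum>b=2..Suc a. 1 / real b)) / real (Suc a)"
    using H_Suc by (simp add: u_def)
  finally show ?case .
qed

lemma sum_desc_pairs_power_div_le_4:
  assumes "k \<ge> 2"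
  shows "(\<Sum>t\<in>desc_tuples_le 2 a. (2 / real (t 0)) ^ k / real (t 1)) \<le> 4"
proof (cases "a \<ge> 1")
  case True
  have "(\<Sum>t\<in>desc_tuples_le 2 a. (2 / real (t 0)) ^ k / real (t 1))
      = (\<Sum>c=2..a. \<Sum>b=2..c. (2 / real c) ^ k / real b)"
    by (simp add: numeral_2_eq_2 sum_desc_tuples_le_Suc desc_tuples_le_0 tuple_cons_def)
  also have "\<dots> \<le> (\<Sum>c=2..a. \<Sum>b=2..c. 4 * (1 / real b / real c ^ 2))"
    using two_div_power_le[OF assms]
    by (intro sum_mono) (simp add: divide_right_mono field_simps)
  also have "\<dots> = 4 * (\<Sum>c=2..a. (\<Sum>b=2..c. 1 / real b) / real c ^ 2)"
    by (simp add: sum_distrib_left sum_divide_distrib)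
  also have "\<dots> \<le> 4"
  proof -
    have "0 \<le> (1 + (\<Sum>b=2..a. 1 / real b)) / real a"
      by (intro divide_nonneg_nonneg add_nonneg_nonneg sum_nonneg) auto
    then show ?thesis using sum_harmonic_div_square_le[OF True] by linarith
  qed
  finally show ?thesis .
next
  case False
  then show ?thesis by (simp add: sum_desc_tuples_le_Suc numeral_2_eq_2)
qed

lemma sum_desc_tuples_le_inverse_prod_power_mult_le:
  assumes "\<forall>i<r. k i \<ge> 2" "r \<ge> 1" "m \<ge> 2"
  shows "(\<Sum>n\<in>desc_tuples_le (Suc r) m. 1 / ((\<Prod>i<r. real (n i) ^ k i) * real (n r)))
    \<le> 24 / 2 ^ (\<Sum>i<r. k i)"
proof -
  obtain p where p: "r = Suc p" using assms(2) by (cases r) auto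
  have regroup: "1 / ((\<Prod>i<Suc p. x i ^ k i) * y)
      = (\<Prod>i<p. (2 / x i) ^ k i) * ((2 / x p) ^ k p / y) / 2 ^ (\<Sum>i<Suc p. k i)"
    for x :: "nat \<Rightarrow> real" and y
    unfolding prod_div_power prod.lessThan_Suc sum.lessThan_Suc power_add
    by (simp add: power_divide)
  have "(\<Sum>n\<in>desc_tuples_le (Suc r) m. 1 / ((\<Prod>i<r. real (n i) ^ k i) * real (n r)))
      = (\<Sum>n\<in>desc_tuples_le (p + 2) m.
          (\<Prod>i<p. (2 / real (n i)) ^ k i) * ((2 / real (n (p + 0))) ^ k p / real (n (p + 1))))
        / 2 ^ (\<Sum>i<r. k i)"
    unfolding p regroup by (simp add: sum_divide_distrib)
  also have "\<dots> \<le> weight_fixpoint m * 4 / 2 ^ (\<Sum>i<r. k i)"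
    using assms p two_div_power_le sum_desc_pairs_power_div_le_4
    by (intro divide_right_mono sum_desc_tuples_le_weighted_prod_le
        [where F = "\<lambda>t. (2 / real (t 0)) ^ k p / real (t 1)"]) auto
  also have "\<dots> \<le> 24 / 2 ^ (\<Sum>i<r. k i)"
    using weight_fixpoint_le_6[of m] by (simp add: divide_right_mono)
  finally show ?thesis .
qed

lemma finite_subset_desc_tuples_le:
  assumes "finite F" "F \<subseteq> desc_tuples q"
  obtains m where "m \<ge> 2" "F \<subseteq> desc_tuples_le q m"
proof
  let ?m = "2 + (\<Sum>n\<in>F. \<Sum>i<q. n i)"
  show "F \<subseteq> desc_tuples_le q ?m"
  proof
    fix n assume n: "n \<in> F"
    have "n i \<le> ?m" if "i < q" for i
    proof -
      have "n i \<le> (\<Sum>i<q. n i)" using that by (intro member_le_sum) auto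
      also have "\<dots> \<le> (\<Sum>n\<in>F. \<Sum>i<q. n i)" using n assms(1) by (intro member_le_sum) auto
      finally show ?thesis by simp
    qed
    then show "n \<in> desc_tuples_le q ?m" using n assms(2) by (auto simp: desc_tuples_le_def)
  qed
qed simp

lemma nonneg_summable_on_desc_tuples:
  fixes h :: "(nat \<Rightarrow> nat) \<Rightarrow> real"
  assumes nonneg: "\<And>n. n \<in> desc_tuples q \<Longrightarrow> h n \<ge> 0"
    and bound: "\<And>m. m \<ge> 2 \<Longrightarrow> sum h (desc_tuples_le q m) \<le> C"
  shows "h summable_on desc_tuples q" and "infsum h (desc_tuples q) \<le> C"
proof -
  have finite_sums: "sum h F \<le> C" if F: "finite F" "F \<subseteq> desc_tuples q" for F
  proof -
    obtain m where "m \<ge> 2" "F \<subseteq> desc_tuples_le q m"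
      using finite_subset_desc_tuples_le[OF F] .
    then have "sum h F \<le> sum h (desc_tuples_le q m)"
      using nonneg by (intro sum_mono2 finite_desc_tuples_le) (auto simp: desc_tuples_le_def)
    also have "\<dots> \<le> C" using bound \<open>m \<ge> 2\<close> .
    finally show ?thesis .
  qed
  show summable: "h summable_on desc_tuples q"
    by (rule nonneg_bdd_above_summable_on)
       (use nonneg finite_sums in \<open>auto intro!: bdd_aboveI[where M = C]\<close>)
  show "infsum h (desc_tuples q) \<le> C"
    by (rule infsum_le_finite_sums[OF summable]) (use finite_sums in auto)
qed

lemma twos_in_desc_tuples: "restrict (\<lambda>_. 2) {..<q} \<in> desc_tuples q"
  by (auto simp: desc_tuples_def)

lemma infsum_desc_tuples_gt_twos:
  fixes h :: "(nat \<Rightarrow> nat) \<Rightarrow> real"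
  assumes "h summable_on desc_tuples q" "q \<ge> 1"
    and pos: "\<And>n. n \<in> desc_tuples q \<Longrightarrow> h n > 0"
  shows "h (restrict (\<lambda>_. 2) {..<q}) < infsum h (desc_tuples q)"
proof -
  let ?twos = "restrict (\<lambda>_. 2 :: nat) {..<q}"
  let ?three = "?twos(0 := 3)"
  have three: "?three \<in> desc_tuples q" "?three \<noteq> ?twos"
    using \<open>q \<ge> 1\<close> by (auto simp: desc_tuples_def split: if_splits dest: fun_cong[of _ _ 0])
  have "h ?twos + h ?three \<le> infsum h (desc_tuples q)"
    using finite_sum_le_infsum[OF assms(1), of "{?twos, ?three}"] three twos_in_desc_tuples pos
    by (simp add: less_imp_le)
  then show ?thesis using pos[OF three(1)] by simp
qed

lemma infsum_desc_tuples_bounds: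
  fixes h :: "(nat \<Rightarrow> nat) \<Rightarrow> real"
  assumes "q \<ge> 1" and pos: "\<And>n. n \<in> desc_tuples q \<Longrightarrow> h n > 0"
    and "\<And>m. m \<ge> 2 \<Longrightarrow> sum h (desc_tuples_le q m) \<le> C"
  shows "h summable_on desc_tuples q \<and> h (restrict (\<lambda>_. 2) {..<q}) < infsum h (desc_tuples q)
    \<and> infsum h (desc_tuples q) \<le> C"
  using nonneg_summable_on_desc_tuples[of q h C] infsum_desc_tuples_gt_twos[of h q] assms
  by (simp add: less_imp_le)

theorem lemma4p3:
  shows "\<exists>C1::real. C1 > 0 \<and>
    (\<forall>r::nat. \<forall>k::nat \<Rightarrow> nat. r \<ge> 1 \<longrightarrow> (\<forall>i<r. k i \<ge> 2) \<longrightarrow>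
      (let K = (\<Sum>i<r. k i);
           f = (\<lambda>n::nat \<Rightarrow> nat. 1 / (\<Prod>i<r. real (n i) ^ k i));
           g = (\<lambda>n::nat \<Rightarrow> nat. 1 / ((\<Prod>i<r. real (n i) ^ k i) * real (n r)))
       in f summable_on desc_tuples r
          \<and> 1 / 2 ^ K < infsum f (desc_tuples r)
          \<and> infsum f (desc_tuples r) \<le> C1 / 2 ^ K
          \<and> g summable_on desc_tuples (Suc r)
          \<and> 1 / 2 ^ (K + 1) < infsum g (desc_tuples (Suc r))
          \<and> infsum g (desc_tuples (Suc r)) \<le> C1 / 2 ^ K))"
proof (intro exI[of _ 24] conjI allI impI, unfold Let_def)
  fix r :: nat and k :: "nat \<Rightarrow> nat"
  assume r: "r \<ge> 1" and k: "\<forall>i<r. k i \<ge> 2"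
  define K where "K = (\<Sum>i<r. k i)"
  define f where "f = (\<lambda>n::nat \<Rightarrow> nat. 1 / (\<Prod>i<r. real (n i) ^ k i))"
  define g where "g = (\<lambda>n::nat \<Rightarrow> nat. 1 / ((\<Prod>i<r. real (n i) ^ k i) * real (n r)))"
  have f_pos: "f n > 0" if "n \<in> desc_tuples r" for n
    using that unfolding f_def desc_tuples_def by (auto intro!: prod_pos)
  have g_pos: "g n > 0" if "n \<in> desc_tuples (Suc r)" for n
    using that unfolding g_def desc_tuples_def by (auto simp: less_Suc_eq intro!: prod_pos mult_pos_pos)
  have f_bound: "sum f (desc_tuples_le r m) \<le> 24 / 2 ^ K" if "m \<ge> 2" for m
  proof -
    have "sum f (desc_tuples_le r m) \<le> 6 / 2 ^ K"
      using sum_desc_tuples_le_inverse_prod_power_le[OF k that] unfolding f_def K_def .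
    also have "\<dots> \<le> 24 / 2 ^ K" by (simp add: divide_right_mono)
    finally show ?thesis .
  qed
  have g_bound: "sum g (desc_tuples_le (Suc r) m) \<le> 24 / 2 ^ K" if "m \<ge> 2" for m
    using sum_desc_tuples_le_inverse_prod_power_mult_le[OF k r that] unfolding g_def K_def .
  have "f (restrict (\<lambda>_. 2) {..<r}) = 1 / 2 ^ K" "g (restrict (\<lambda>_. 2) {..<Suc r}) = 1 / 2 ^ (K + 1)"
    unfolding f_def g_def K_def by (simp_all add: power_sum)
  then show "f summable_on desc_tuples r \<and> 1 / 2 ^ K < infsum f (desc_tuples r) \<and>
      infsum f (desc_tuples r) \<le> 24 / 2 ^ K \<and> g summable_on desc_tuples (Suc r) \<and>
      1 / 2 ^ (K + 1) < infsum g (desc_tuples (Suc r)) \<and>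
      infsum g (desc_tuples (Suc r)) \<le> 24 / 2 ^ K"
    using infsum_desc_tuples_bounds[OF r f_pos f_bound]
      infsum_desc_tuples_bounds[of "Suc r", OF _ g_pos g_bound] by simp
qed simp

end
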